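(* Let $N,K,T\ge1$, let $\mathbf{W}\in\mathbb{R}^{N\times K}$ have linearly independent columns $\mathbf{w}_1,\dots,\mathbf{w}_K$, let $\bar{\boldsymbol{\Psi}}_{\mathrm{id}}\in\mathbb{R}^{N\times N}$ and $\bar{\boldsymbol{\Psi}}_{\mathrm{f}}\in\mathbb{R}^{K\times K}$ be diagonal with strictly positive diagonal entries, and let $\alpha_1,\dots,\alpha_T>0$, $\beta_1,\dots,\beta_T>0$ with $\sum_t\alpha_t=\sum_t\beta_t=1$. For $t=1,\dots,T$ set $\boldsymbol{\Psi}_{\mathrm{id},t}=\alpha_t\bar{\boldsymbol{\Psi}}_{\mathrm{id}}$, $\boldsymbol{\Psi}_{\mathrm{f},t}=\beta_t\bar{\boldsymbol{\Psi}}_{\mathrm{f}}$ and $\mathbf{G}_t=\left(\boldsymbol{\Psi}_{\mathrm{id},t}+\mathbf{W}\boldsymbol{\Psi}_{\mathrm{f},t}\mathbf{W}^\top\right)^{-1}$. Let $\mathbf{x}_0\in\mathbb{R}^N$. Then the schedule $$\mathbf{v}_t^*=\alpha_t\mathbf{x}_0+(\beta_t-\alpha_t)\,\mathbf{W}\left(\bar{\boldsymbol{\Psi}}_{\mathrm{f}}^{-1}+\mathbf{W}^\top\bar{\boldsymbol{\Psi}}_{\mathrm{id}}^{-1}\mathbf{W}\right)^{-1}\mathbf{W}^\top\bar{\boldsymbol{\Psi}}_{\mathrm{id}}^{-1}\mathbf{x}_0,\qquad t=1,\dots,T,$$ is optimal for the problem of minimizing $\sum_{t=1}^T\tfrac12\mathbf{v}_t^\top\mathbf{G}_t\mathbf{v}_t$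 subject to $\sum_{t=1}^T\mathbf{v}_t=\mathbf{x}_0$. Equivalently, $\mathbf{v}_t^*=\alpha_t\mathbf{x}_0+(\beta_t-\alpha_t)\sum_{k=1}^K(\widehat{\mathbf{w}}_k^\top\mathbf{x}_0)\,\mathbf{w}_k$, where $\widehat{\mathbf{w}}_k$ is the $k$-th column of $\widehat{\mathbf{W}}=\bar{\boldsymbol{\Psi}}_{\mathrm{id}}^{-1}\mathbf{W}\left(\bar{\boldsymbol{\Psi}}_{\mathrm{f}}^{-1}+\mathbf{W}^\top\bar{\boldsymbol{\Psi}}_{\mathrm{id}}^{-1}\mathbf{W}\right)^{-1}$.
   Context: $\alpha_t$ and $\beta_t$ are the intraday activity profiles of single-stock and index-fund liquidity providers respectively. *)

theory Defs
  imports "HOL-Analysis.Analysis"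
begin

definition pos_diag :: "real^'n^'n \<Rightarrow> bool" where
  "pos_diag D \<longleftrightarrow> (\<forall>i j. i \<noteq> j \<longrightarrow> D $ i $ j = 0) \<and> (\<forall>i. D $ i $ i > 0)"

definition indep_columns :: "real^'k^'n \<Rightarrow> bool" where
  "indep_columns W \<longleftrightarrow> (\<forall>c. W *v c = 0 \<longrightarrow> c = 0)"

definition sched_cost :: "nat \<Rightarrow> (nat \<Rightarrow> real^'n^'n) \<Rightarrow> (nat \<Rightarrow> real^'n) \<Rightarrow> real" where
  "sched_cost T G v = (\<Sum>t=1..T. (1/2) * (v t \<bullet> (G t *v v t)))"

end

theory Submission
  imports Defs
begin

text \<open>
  With \<open>M\<^sub>t = \<alpha>\<^sub>t \<Psi>\<^sub>i\<^sub>d + \<beta>\<^sub>t W \<Psi>\<^sub>f W\<^sup>T\<close> we have \<open>G\<^sub>t = M\<^sub>t\<^sup>-\<^sup>1\<close>, and the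
  schedule is \<open>v\<^sub>t\<^sup>* = M\<^sub>t \<mu>\<close> for the single vector
  \<open>\<mu> = \<Psi>\<^sub>i\<^sub>d\<^sup>-\<^sup>1 (x\<^sub>0 - P x\<^sub>0)\<close>, \<open>P = W (\<Psi>\<^sub>f\<^sup>-\<^sup>1 + W\<^sup>T \<Psi>\<^sub>i\<^sub>d\<^sup>-\<^sup>1 W)\<^sup>-\<^sup>1 W\<^sup>T \<Psi>\<^sub>i\<^sub>d\<^sup>-\<^sup>1\<close>:
  indeed \<open>\<Psi>\<^sub>i\<^sub>d \<mu> = x\<^sub>0 - P x\<^sub>0\<close> and, by a Woodbury-type computation,
  \<open>W \<Psi>\<^sub>f W\<^sup>T \<mu> = P x\<^sub>0\<close>. Hence every marginal cost \<open>G\<^sub>t v\<^sub>t\<^sup>*\<close> equals \<open>\<mu>\<close>,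
  which is the first-order condition of the convex problem with the linear constraint
  \<open>\<Sum>\<^sub>t v\<^sub>t = x\<^sub>0\<close>: for a feasible \<open>v = v\<^sup>* + d\<close>, the cross terms sum to
  \<open>\<mu> \<bullet> \<Sum>\<^sub>t d\<^sub>t = 0\<close> and the remaining terms \<open>d\<^sub>t \<bullet> G\<^sub>t d\<^sub>t\<close> are nonnegative.
\<close>

lemma matrix_inv_right:
  fixes A :: "real^'n^'n"
  assumes "invertible A"
  shows "A ** matrix_inv A = mat 1"
  using someI_ex[OF assms[unfolded invertible_def]] unfolding matrix_inv_def by blast

lemma matrix_inv_left:
  fixes A :: "real^'n^'n"
  assumes "invertible A"
  shows "matrix_inv A ** A = mat 1"
  using someI_ex[OF assms[unfolded invertible_def]] unfolding matrix_inv_def by blast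

lemma matrix_vector_mul_inv_right:
  fixes A :: "real^'n^'n"
  assumes "invertible A"
  shows "A *v (matrix_inv A *v x) = x"
  by (simp add: matrix_vector_mul_assoc matrix_inv_right[OF assms])

lemma matrix_vector_mul_inv_left:
  fixes A :: "real^'n^'n"
  assumes "invertible A"
  shows "matrix_inv A *v (A *v x) = x"
  by (simp add: matrix_vector_mul_assoc matrix_inv_left[OF assms])

lemma transpose_matrix_inv_symmetric:
  fixes A :: "real^'n^'n"
  assumes "invertible A" and "transpose A = A"
  shows "transpose (matrix_inv A) = matrix_inv A"
proof -
  have left_inverse: "transpose (matrix_inv A) ** A = mat 1"
    using matrix_inv_right[OF assms(1)] assms(2) by (metis matrix_transpose_mul transpose_mat)
  have "transpose (matrix_inv A) = transpose (matrix_inv A) ** A ** matrix_inv A"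
    by (simp add: matrix_mul_assoc[symmetric] matrix_inv_right[OF assms(1)])
  also have "\<dots> = matrix_inv A"
    by (simp add: left_inverse)
  finally show ?thesis .
qed

lemma transpose_add_matrix: "transpose (A + B) = transpose A + transpose (B :: real^'n^'m)"
  by (simp add: vec_eq_iff transpose_def)

lemma sum_column_inner_scaleR_column:
  fixes Q W :: "real^'k^'n"
  shows "(\<Sum>k\<in>UNIV. (column k Q \<bullet> x) *\<^sub>R column k W) = W *v (transpose Q *v x)"
  by (simp add: vec_eq_iff matrix_vector_mult_def transpose_def column_def inner_vec_def
      sum_distrib_left sum_distrib_right mult_ac)

definition pos_def :: "real^'n^'n \<Rightarrow> bool" where
  "pos_def M \<longleftrightarrow> (\<forall>x. x \<noteq> 0 \<longrightarrow> 0 < x \<bullet> (M *v x))"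

definition pos_semidef :: "real^'n^'n \<Rightarrow> bool" where
  "pos_semidef M \<longleftrightarrow> (\<forall>x. 0 \<le> x \<bullet> (M *v x))"

lemma pos_def_imp_pos_semidef: "pos_def M \<Longrightarrow> pos_semidef M"
  unfolding pos_def_def pos_semidef_def by (metis inner_zero_left order.strict_implies_order order.refl)

lemma pos_def_imp_invertible:
  assumes "pos_def M"
  shows "invertible M"
proof -
  have "M *v x = 0 \<Longrightarrow> x = 0" for x
    using assms unfolding pos_def_def by (metis inner_zero_right less_irrefl)
  then show ?thesis
    by (auto simp: invertible_left_inverse matrix_left_invertible_ker)
qed

lemma pos_def_matrix_inv:
  fixes M :: "real^'n^'n"
  assumes "pos_def M"
  shows "pos_def (matrix_inv M)"
  unfolding pos_def_def
proof (intro allI impI)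
  fix x :: "real^'n"
  assume "x \<noteq> 0"
  define y where "y = matrix_inv M *v x"
  have x: "x = M *v y"
    unfolding y_def by (simp add: matrix_vector_mul_inv_right pos_def_imp_invertible assms)
  with \<open>x \<noteq> 0\<close> have "0 < y \<bullet> (M *v y)"
    using assms unfolding pos_def_def by (metis matrix_vector_mult_0_right)
  moreover have "x \<bullet> (matrix_inv M *v x) = y \<bullet> (M *v y)"
    by (simp only: y_def[symmetric]) (simp add: x inner_commute)
  ultimately show "0 < x \<bullet> (matrix_inv M *v x)"
    by simp
qed

lemma pos_semidef_congruence:
  fixes W :: "real^'k^'n"
  assumes "pos_semidef M"
  shows "pos_semidef (transpose W ** M ** W)"
  unfolding pos_semidef_def
proof
  fix x :: "real^'k"
  have "x \<bullet> ((transpose W ** M ** W) *v x) = (W *v x) \<bullet> (M *v (W *v x))"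
    by (metis dot_lmul_matrix inner_commute matrix_vector_mul_assoc transpose_matrix_vector)
  then show "0 \<le> x \<bullet> ((transpose W ** M ** W) *v x)"
    using assms unfolding pos_semidef_def by simp
qed

lemma pos_def_add_pos_semidef: "pos_def A \<Longrightarrow> pos_semidef B \<Longrightarrow> pos_def (A + B)"
  unfolding pos_def_def pos_semidef_def
  by (simp add: matrix_vector_mult_add_rdistrib inner_add_right add_pos_nonneg)

lemma pos_def_scaleR: "pos_def A \<Longrightarrow> c > 0 \<Longrightarrow> pos_def (c *\<^sub>R A)"
  unfolding pos_def_def by (simp add: scaleR_matrix_vector_assoc[symmetric])

lemma pos_semidef_scaleR: "pos_semidef A \<Longrightarrow> c \<ge> 0 \<Longrightarrow> pos_semidef (c *\<^sub>R A)"
  unfolding pos_semidef_def by (simp add: scaleR_matrix_vector_assoc[symmetric])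

lemma pos_def_scaleR_add_congruence:
  fixes W :: "real^'k^'n"
  assumes "pos_def D" and "pos_semidef F" and "a > 0" and "b \<ge> 0"
  shows "pos_def (a *\<^sub>R D + W ** (b *\<^sub>R F) ** transpose W)"
proof -
  have "W ** (b *\<^sub>R F) ** transpose W = b *\<^sub>R (transpose (transpose W) ** F ** transpose W)"
    by (simp add: matrix_scalar_ac scalar_matrix_assoc)
  then show ?thesis
    using assms by (metis pos_def_add_pos_semidef pos_def_scaleR pos_semidef_scaleR pos_semidef_congruence)
qed

lemma transpose_scaleR_add_congruence:
  fixes W :: "real^'k^'n"
  assumes "transpose D = D" and "transpose F = F"
  shows "transpose (a *\<^sub>R D + W ** (b *\<^sub>R F) ** transpose W) = a *\<^sub>R D + W ** (b *\<^sub>R F) ** transpose W"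
  by (simp add: assms transpose_add_matrix transpose_scalar matrix_transpose_mul matrix_mul_assoc)

lemma pos_def_matrix_inv_add_congruence:
  fixes W :: "real^'k^'n"
  assumes "pos_def D" and "pos_def F"
  shows "pos_def (matrix_inv F + transpose W ** matrix_inv D ** W)"
  using assms
  by (metis pos_def_add_pos_semidef pos_def_matrix_inv pos_semidef_congruence pos_def_imp_pos_semidef)

lemma pos_diag_mult_vector:
  assumes "pos_diag D"
  shows "(D *v x) $ i = D $ i $ i * x $ i"
proof -
  have "(D *v x) $ i = (\<Sum>j\<in>UNIV. D $ i $ j * x $ j)"
    by (simp add: matrix_vector_mult_def)
  also have "\<dots> = (\<Sum>j\<in>UNIV. if j = i then D $ i $ i * x $ i else 0)"
    by (rule sum.cong) (use assms in \<open>auto simp: pos_diag_def\<close>)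
  finally show ?thesis by simp
qed

lemma pos_diag_symmetric: "pos_diag D \<Longrightarrow> transpose D = D"
  unfolding pos_diag_def transpose_def by (simp add: vec_eq_iff) metis

lemma pos_diag_imp_pos_def:
  fixes D :: "real^'n^'n"
  assumes "pos_diag D"
  shows "pos_def D"
  unfolding pos_def_def
proof (intro allI impI)
  fix x :: "real^'n"
  assume "x \<noteq> 0"
  then obtain i where i: "x $ i \<noteq> 0" by (metis vec_eq_iff zero_index)
  have "0 < (\<Sum>j\<in>UNIV. D $ j $ j * (x $ j)\<^sup>2)"
    using assms i unfolding pos_diag_def
    by (intro sum_pos2[where i=i]) (auto simp: less_imp_le)
  then show "0 < x \<bullet> (D *v x)"
    by (simp add: inner_vec_def pos_diag_mult_vector[OF assms] power2_eq_square mult_ac)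
qed

lemma quadratic_form_ge_linearization:
  fixes G :: "real^'n^'n"
  assumes "transpose G = G" and "pos_semidef G"
  shows "u \<bullet> (G *v u) + 2 * ((v - u) \<bullet> (G *v u)) \<le> v \<bullet> (G *v v)"
proof -
  define d where "d = v - u"
  have "u \<bullet> (G *v d) = d \<bullet> (G *v u)"
    using assms(1) by (metis dot_lmul_matrix inner_commute transpose_matrix_vector)
  moreover have "0 \<le> d \<bullet> (G *v d)"
    using assms(2) unfolding pos_semidef_def by blast
  moreover have "v \<bullet> (G *v v) = u \<bullet> (G *v u) + u \<bullet> (G *v d) + d \<bullet> (G *v u) + d \<bullet> (G *v d)"
    by (simp add: d_def algebra_simps inner_diff_left inner_diff_right)
  ultimately show ?thesis
    by (simp add: d_def)
qed

lemma sched_cost_le_of_common_marginal: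
  assumes G: "\<And>t. t \<in> {1..T} \<Longrightarrow> transpose (G t) = G t \<and> pos_semidef (G t)"
    and marginal: "\<And>t. t \<in> {1..T} \<Longrightarrow> G t *v u t = \<mu>"
    and feasible: "(\<Sum>t=1..T. v t) = (\<Sum>t=1..T. u t)"
  shows "sched_cost T G u \<le> sched_cost T G v"
proof -
  have "(\<Sum>t=1..T. (v t - u t) \<bullet> \<mu>) = 0"
    using feasible by (simp add: inner_sum_left[symmetric] sum_subtractf)
  then have "sched_cost T G u = (\<Sum>t=1..T. (1/2) * (u t \<bullet> (G t *v u t) + 2 * ((v t - u t) \<bullet> \<mu>)))"
    unfolding sched_cost_def by (simp add: sum.distrib distrib_left sum_distrib_left[symmetric])
  also have "\<dots> \<le> sched_cost T G v"
    unfolding sched_cost_def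
    using G marginal quadratic_form_ge_linearization by (intro sum_mono mult_left_mono) fastforce+
  finally show ?thesis .
qed

lemma sched_cost_le_of_inverse_costs:
  assumes M: "\<And>t. t \<in> {1..T} \<Longrightarrow> pos_def (M t) \<and> transpose (M t) = M t"
    and G: "\<And>t. G t = matrix_inv (M t)"
    and u: "\<And>t. u t = M t *v \<mu>"
    and feasible: "(\<Sum>t=1..T. v t) = (\<Sum>t=1..T. u t)"
  shows "sched_cost T G u \<le> sched_cost T G v"
proof (rule sched_cost_le_of_common_marginal[OF _ _ feasible])
  show "transpose (G t) = G t \<and> pos_semidef (G t)" if "t \<in> {1..T}" for t
    using M[OF that] by (simp add: G transpose_matrix_inv_symmetric pos_def_imp_invertible
        pos_def_imp_pos_semidef pos_def_matrix_inv)
  show "G t *v u t = \<mu>" if "t \<in> {1..T}" for t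
    using M[OF that] by (simp add: G u matrix_vector_mul_inv_left pos_def_imp_invertible)
qed

lemma woodbury_mult_multiplier:
  fixes W :: "real^'k^'n" and F :: "real^'k^'k" and E :: "real^'n^'n"
  defines "A \<equiv> matrix_inv F + transpose W ** E ** W"
  defines "P \<equiv> W ** matrix_inv A ** transpose W ** E"
  assumes "invertible F" and "invertible A"
  shows "(W ** F ** transpose W) *v (E *v (x - P *v x)) = P *v x"
proof -
  define z where "z = matrix_inv A *v (transpose W *v (E *v x))"
  have Px: "P *v x = W *v z"
    by (simp add: P_def z_def matrix_vector_mul_assoc matrix_mul_assoc)
  have "transpose W *v (E *v (W *v z)) = (A - matrix_inv F) *v z"
    by (simp add: A_def matrix_vector_mul_assoc matrix_mul_assoc)
  also have "\<dots> = transpose W *v (E *v x) - matrix_inv F *v z"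
    by (simp add: matrix_vector_mult_diff_rdistrib z_def matrix_vector_mul_inv_right assms(4))
  finally have "transpose W *v (E *v (x - P *v x)) = matrix_inv F *v z"
    by (simp add: Px matrix_vector_mult_diff_distrib)
  then show ?thesis
    by (simp add: matrix_vector_mul_assoc[symmetric] matrix_vector_mul_inv_right assms(3) Px)
qed

lemma scaleR_add_congruence_mult_multiplier:
  fixes W :: "real^'k^'n" and F :: "real^'k^'k" and D :: "real^'n^'n"
  defines "A \<equiv> matrix_inv F + transpose W ** matrix_inv D ** W"
  defines "P \<equiv> W ** matrix_inv A ** transpose W ** matrix_inv D"
  assumes "invertible D" and "invertible F" and "invertible A"
  shows "(a *\<^sub>R D + W ** (b *\<^sub>R F) ** transpose W) *v (matrix_inv D *v (x - P *v x))
    = a *\<^sub>R x + (b - a) *\<^sub>R (P *v x)"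
proof -
  have "(W ** F ** transpose W) *v (matrix_inv D *v (x - P *v x)) = P *v x"
    using woodbury_mult_multiplier assms unfolding A_def P_def by blast
  moreover have "W ** (b *\<^sub>R F) ** transpose W = b *\<^sub>R (W ** F ** transpose W)"
    by (simp add: matrix_scalar_ac scalar_matrix_assoc)
  ultimately show ?thesis
    by (simp add: matrix_vector_mult_add_rdistrib scaleR_matrix_vector_assoc[symmetric]
        matrix_vector_mul_inv_right assms(3) algebra_simps)
qed

theorem proposition4:
  fixes W :: "real^'k^'n" and Psi_id :: "real^'n^'n" and Psi_f :: "real^'k^'k"
    and \<alpha> \<beta> :: "nat \<Rightarrow> real" and T :: nat and x0 :: "real^'n"
    and G :: "nat \<Rightarrow> real^'n^'n" and vstar :: "nat \<Rightarrow> real^'n"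
    and What :: "real^'k^'n"
  assumes T1: "T \<ge> 1"
    and W_indep: "indep_columns W"
    and Pid: "pos_diag Psi_id" and Pf: "pos_diag Psi_f"
    and alpha_pos: "\<forall>t\<in>{1..T}. \<alpha> t > 0" and beta_pos: "\<forall>t\<in>{1..T}. \<beta> t > 0"
    and alpha_sum: "(\<Sum>t=1..T. \<alpha> t) = 1" and beta_sum: "(\<Sum>t=1..T. \<beta> t) = 1"
    and G_def: "\<forall>t. G t = matrix_inv (\<alpha> t *\<^sub>R Psi_id + W ** (\<beta> t *\<^sub>R Psi_f) ** transpose W)"
    and vstar_def: "\<forall>t. vstar t = \<alpha> t *\<^sub>R x0 + (\<beta> t - \<alpha> t) *\<^sub>R
         ((W ** matrix_inv (matrix_inv Psi_f + transpose W ** matrix_inv Psi_id ** W)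
             ** transpose W ** matrix_inv Psi_id) *v x0)"
    and What_def: "What = matrix_inv Psi_id ** W **
         matrix_inv (matrix_inv Psi_f + transpose W ** matrix_inv Psi_id ** W)"
  shows "(\<Sum>t=1..T. vstar t) = x0
    \<and> (\<forall>v :: nat \<Rightarrow> real^'n. (\<Sum>t=1..T. v t) = x0 \<longrightarrow> sched_cost T G vstar \<le> sched_cost T G v)
    \<and> (\<forall>t\<in>{1..T}. vstar t = \<alpha> t *\<^sub>R x0 + (\<beta> t - \<alpha> t) *\<^sub>R
         (\<Sum>k\<in>UNIV. (column k What \<bullet> x0) *\<^sub>R column k W))"
proof -
  define A where "A = matrix_inv Psi_f + transpose W ** matrix_inv Psi_id ** W"
  define P where "P = W ** matrix_inv A ** transpose W ** matrix_inv Psi_id"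
  define M where "M t = \<alpha> t *\<^sub>R Psi_id + W ** (\<beta> t *\<^sub>R Psi_f) ** transpose W" for t
  define \<mu> where "\<mu> = matrix_inv Psi_id *v (x0 - P *v x0)"
  have vstar: "vstar t = \<alpha> t *\<^sub>R x0 + (\<beta> t - \<alpha> t) *\<^sub>R (P *v x0)" for t
    using vstar_def by (simp add: P_def A_def)
  have Psi: "pos_def Psi_id" "pos_def Psi_f" "transpose Psi_id = Psi_id" "transpose Psi_f = Psi_f"
    using Pid Pf by (simp_all add: pos_diag_imp_pos_def pos_diag_symmetric)
  have "pos_def A"
    unfolding A_def using Psi by (simp add: pos_def_matrix_inv_add_congruence)
  have M_pos_def_sym: "pos_def (M t) \<and> transpose (M t) = M t" if "t \<in> {1..T}" for t
    using that alpha_pos beta_pos Psi unfolding M_def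
    by (simp add: pos_def_scaleR_add_congruence transpose_scaleR_add_congruence
        pos_def_imp_pos_semidef less_imp_le)
  have vstar_M: "vstar t = M t *v \<mu>" for t
    using \<open>pos_def A\<close> Psi unfolding vstar M_def \<mu>_def P_def A_def
    by (simp add: scaleR_add_congruence_mult_multiplier pos_def_imp_invertible)
  have G_inv: "G t = matrix_inv (M t)" for t
    using G_def by (simp add: M_def)
  have feasible: "(\<Sum>t=1..T. vstar t) = x0"
    using alpha_sum beta_sum unfolding vstar
    by (simp add: sum.distrib scaleR_sum_left[symmetric] sum_subtractf)
  moreover have "sched_cost T G vstar \<le> sched_cost T G v" if "(\<Sum>t=1..T. v t) = x0" for v
    by (rule sched_cost_le_of_inverse_costs[OF M_pos_def_sym G_inv vstar_M that[folded feasible]])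
  moreover have "(\<Sum>k\<in>UNIV. (column k What \<bullet> x0) *\<^sub>R column k W) = P *v x0"
  proof -
    have "transpose (matrix_inv A) = matrix_inv A" "transpose (matrix_inv Psi_id) = matrix_inv Psi_id"
      using \<open>pos_def A\<close> Psi A_def
      by (simp_all add: transpose_matrix_inv_symmetric pos_def_imp_invertible transpose_add_matrix
          matrix_transpose_mul matrix_mul_assoc)
    then show ?thesis
      unfolding sum_column_inner_scaleR_column What_def P_def A_def[symmetric]
      by (simp add: matrix_transpose_mul matrix_vector_mul_assoc matrix_mul_assoc)
  qed
  ultimately show ?thesis
    using vstar by auto
qed

end
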